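(* Let $d\ge1$ and let $P$ be a probability distribution on $\{0,1\}^d$ with $P(\nu)>0$ for every $\nu\in\{0,1\}^d$. Define \[ \lambda(P):=\sup\{\lambda\ge0\mid \exists\, Q \text{ a probability distribution on }\{0,1\}^d\text{ with independent marginals such that } P(\nu)\ge\lambda Q(\nu)\ \forall \nu\in\{0,1\}^d\}. \] For $\omega\in\{0,1\}^d$ and $q\in[0,1]^d$ let $f_\omega(q):=\prod_{i=1}^d q_i^{-\omega_i}(1-q_i)^{\omega_i-1}\in\mathbb{R}\cup\{+\infty\}$ (with $0^0=1$, $1/0=+\infty$), and let \[ \mathcal{Q}_\omega:=\{q\in[0,1]^d \mid \forall \nu\in\{0,1\}^d:\ P(\omega)f_\omega(q)\le P(\nu)f_\nu(q)\}. \] Then \[ \lambda(P)=\max_{\omega\in\{0,1\}^d}\ \max_{q\in\mathcal{Q}_\omega} P(\omega)f_\omega(q). \]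
   Context: A probability distribution $Q$ on $\{0,1\}^d$ has independent marginals if $Q=\mu_1\otimes\cdots\otimes\mu_d$ for some probability distributions $\mu_1,\ldots,\mu_d$ on $\{0,1\}$, i.e. $Q$ is the law of a vector of independent (not necessarily identically distributed) Bernoulli random variables. *)

theory Defs
  imports "HOL-Analysis.Analysis"
begin

text \<open>The cube {0,1}^d, points as extensional functions {..<d} -> bool
  (True = 1, False = 0).\<close>
definition cube :: "nat \<Rightarrow> (nat \<Rightarrow> bool) set" where
  "cube d = ({..<d} \<rightarrow>\<^sub>E (UNIV :: bool set))"

definition prob_dist :: "nat \<Rightarrow> ((nat \<Rightarrow> bool) \<Rightarrow> real) \<Rightarrow> bool" where
  "prob_dist d Q \<longleftrightarrow> (\<forall>\<nu>\<in>cube d. Q \<nu> \<ge> 0) \<and> (\<Sum>\<nu>\<in>cube d. Q \<nu>) = 1"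

definition indep_marginals :: "nat \<Rightarrow> ((nat \<Rightarrow> bool) \<Rightarrow> real) \<Rightarrow> bool" where
  "indep_marginals d Q \<longleftrightarrow>
     (\<exists>\<mu> :: nat \<Rightarrow> bool \<Rightarrow> real.
        (\<forall>i<d. \<mu> i True \<ge> 0 \<and> \<mu> i False \<ge> 0 \<and> \<mu> i True + \<mu> i False = 1) \<and>
        (\<forall>\<nu>\<in>cube d. Q \<nu> = (\<Prod>i<d. \<mu> i (\<nu> i))))"

definition lambdaP :: "nat \<Rightarrow> ((nat \<Rightarrow> bool) \<Rightarrow> real) \<Rightarrow> real" where
  "lambdaP d P = Sup {l. l \<ge> 0 \<and> (\<exists>Q. prob_dist d Q \<and> indep_marginals d Q \<and>
                                 (\<forall>\<nu>\<in>cube d. P \<nu> \<ge> l * Q \<nu>))}"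

text \<open>f_omega(q) = prod_i q_i^(-omega_i) (1-q_i)^(omega_i - 1), valued in ereal,
  with 1/0 = +infinity (inverse of ereal 0 is PInfty).\<close>
definition f_om :: "nat \<Rightarrow> (nat \<Rightarrow> bool) \<Rightarrow> (nat \<Rightarrow> real) \<Rightarrow> ereal" where
  "f_om d \<omega> q = (\<Prod>i<d. if \<omega> i then inverse (ereal (q i)) else inverse (ereal (1 - q i)))"

definition Qset :: "nat \<Rightarrow> ((nat \<Rightarrow> bool) \<Rightarrow> real) \<Rightarrow> (nat \<Rightarrow> bool) \<Rightarrow> (nat \<Rightarrow> real) set" where
  "Qset d P \<omega> = {q. q \<in> {..<d} \<rightarrow> {0..1} \<and>
      (\<forall>\<nu>\<in>cube d. ereal (P \<omega>) * f_om d \<omega> q \<le> ereal (P \<nu>) * f_om d \<nu> q)}"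

end

theory Submission
  imports Defs
begin

text \<open>Every law with independent marginals is a product \<open>Q\<^sub>q\<close> of Bernoulli laws with
  parameters \<open>q \<in> [0,1]\<^sup>d\<close>, and \<open>f\<^sub>\<omega>(q) = 1 / Q\<^sub>q(\<omega>)\<close>. Hence the largest \<open>\<lambda>\<close> with
  \<open>P \<ge> \<lambda> Q\<^sub>q\<close> is \<open>min\<^sub>\<nu> P(\<nu>) f\<^sub>\<nu>(q)\<close>, and \<open>q \<in> \<Q>\<^sub>\<omega>\<close> says precisely that \<open>\<omega>\<close> attains
  this minimum. So the right-hand side is the supremum over \<open>q\<close> of the best scale for \<open>Q\<^sub>q\<close>,
  i.e. \<open>\<lambda>(P)\<close>; it is a maximum because the admissible pairs \<open>(\<lambda>, q)\<close> form a compact set.\<close>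

definition bernoulli_prod :: "nat \<Rightarrow> (nat \<Rightarrow> real) \<Rightarrow> (nat \<Rightarrow> bool) \<Rightarrow> real" where
  "bernoulli_prod d q \<nu> = (\<Prod>i<d. if \<nu> i then q i else 1 - q i)"

lemma finite_cube: "finite (cube d)"
  unfolding cube_def by (intro finite_PiE) auto

lemma sum_bernoulli_prod: "(\<Sum>\<nu>\<in>cube d. bernoulli_prod d q \<nu>) = 1"
proof -
  have "(\<Sum>\<nu>\<in>cube d. bernoulli_prod d q \<nu>) =
        (\<Prod>i<d. \<Sum>b\<in>(UNIV :: bool set). if b then q i else 1 - q i)"
    unfolding cube_def bernoulli_prod_def by (rule prod_sum_PiE [symmetric]) auto
  also have "\<dots> = 1"
    by (simp add: UNIV_bool)
  finally show ?thesis .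
qed

lemma bernoulli_prod_nonneg: "q \<in> {..<d} \<rightarrow> {0..1} \<Longrightarrow> 0 \<le> bernoulli_prod d q \<nu>"
  unfolding bernoulli_prod_def by (intro prod_nonneg) auto

lemma ex_bernoulli_prod_pos:
  assumes "q \<in> {..<d} \<rightarrow> {0..1}"
  shows "\<exists>\<nu>\<in>cube d. 0 < bernoulli_prod d q \<nu>"
proof (rule ccontr)
  assume "\<not> ?thesis"
  then have "\<forall>\<nu>\<in>cube d. bernoulli_prod d q \<nu> = 0"
    using bernoulli_prod_nonneg [OF assms] by (meson antisym not_le)
  then show False
    using sum_bernoulli_prod [of d q] by simp
qed

lemma prob_dist_bernoulli_prod:
  "q \<in> {..<d} \<rightarrow> {0..1} \<Longrightarrow> prob_dist d (bernoulli_prod d q)"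
  unfolding prob_dist_def by (simp add: bernoulli_prod_nonneg sum_bernoulli_prod)

lemma indep_marginals_bernoulli_prod:
  "q \<in> {..<d} \<rightarrow> {0..1} \<Longrightarrow> indep_marginals d (bernoulli_prod d q)"
  unfolding indep_marginals_def bernoulli_prod_def
  by (intro exI [of _ "\<lambda>i b. if b then q i else 1 - q i"]) auto

lemma indep_marginals_imp_bernoulli_prod:
  assumes "indep_marginals d Q"
  obtains q where "q \<in> PiE {..<d} (\<lambda>_. {0..1})" "\<forall>\<nu>\<in>cube d. Q \<nu> = bernoulli_prod d q \<nu>"
proof -
  obtain \<mu> where \<mu>: "\<forall>i<d. \<mu> i True \<ge> 0 \<and> \<mu> i False \<ge> 0 \<and> \<mu> i True + \<mu> i False = 1"
    and Q: "\<forall>\<nu>\<in>cube d. Q \<nu> = (\<Prod>i<d. \<mu> i (\<nu> i))"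
    using assms unfolding indep_marginals_def by blast
  define q where "q = restrict (\<lambda>i. \<mu> i True) {..<d}"
  have "q \<in> PiE {..<d} (\<lambda>_. {0..1})"
    unfolding q_def using \<mu> by (auto simp: PiE_iff)
  moreover have "(\<Prod>i<d. \<mu> i (\<nu> i)) = bernoulli_prod d q \<nu>" for \<nu>
    unfolding bernoulli_prod_def q_def using \<mu>
    by (intro prod.cong refl) (auto simp: eq_diff_eq')
  ultimately show thesis
    using that Q by simp
qed

lemma prod_inverse_ereal:
  "finite A \<Longrightarrow> (\<And>i. i \<in> A \<Longrightarrow> 0 \<le> g i) \<Longrightarrow>
    (\<Prod>i\<in>A. inverse (ereal (g i))) = inverse (ereal (\<Prod>i\<in>A. g i))"
proof (induction A rule: finite_induct)
  case empty
  then show ?case by (simp add: one_ereal_def)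
next
  case (insert x A)
  have "0 \<le> g x" "0 \<le> prod g A"
    using insert.prems by (auto intro: prod_nonneg)
  then have "inverse (ereal (g x)) * inverse (ereal (prod g A)) =
      inverse (ereal (g x * prod g A))"
    by (cases "g x = 0"; cases "prod g A = 0") (auto simp: less_le)
  then show ?case
    using insert by simp
qed

lemma f_om_eq_inverse_bernoulli_prod:
  assumes "q \<in> {..<d} \<rightarrow> {0..1}"
  shows "f_om d \<omega> q = inverse (ereal (bernoulli_prod d q \<omega>))"
proof -
  have "f_om d \<omega> q = (\<Prod>i<d. inverse (ereal (if \<omega> i then q i else 1 - q i)))"
    unfolding f_om_def by (intro prod.cong) auto
  also have "\<dots> = inverse (ereal (bernoulli_prod d q \<omega>))"
    unfolding bernoulli_prod_def using assms by (intro prod_inverse_ereal) auto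
  finally show ?thesis .
qed

lemma le_ereal_mult_inverse_iff:
  assumes "0 < p" "0 \<le> x"
  shows "ereal l \<le> ereal p * inverse (ereal x) \<longleftrightarrow> l * x \<le> p"
proof (cases "x = 0")
  case False
  then have "ereal p * inverse (ereal x) = ereal (p / x)"
    by (simp add: divide_inverse)
  then show ?thesis
    using assms False by (simp add: pos_le_divide_eq)
qed (use assms in simp)

definition product_scales :: "nat \<Rightarrow> ((nat \<Rightarrow> bool) \<Rightarrow> real) \<Rightarrow> real set" where
  "product_scales d P = {l. 0 \<le> l \<and>
     (\<exists>q\<in>PiE {..<d} (\<lambda>_. {0..1}). \<forall>\<nu>\<in>cube d. l * bernoulli_prod d q \<nu> \<le> P \<nu>)}"

lemma lambdaP_eq_Sup_product_scales: "lambdaP d P = Sup (product_scales d P)"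
  unfolding lambdaP_def
proof (intro arg_cong [where f = Sup] equalityI subsetI)
  fix l
  assume "l \<in> {l. 0 \<le> l \<and> (\<exists>Q. prob_dist d Q \<and> indep_marginals d Q \<and>
                        (\<forall>\<nu>\<in>cube d. l * Q \<nu> \<le> P \<nu>))}"
  then obtain Q where l: "0 \<le> l" "indep_marginals d Q" "\<forall>\<nu>\<in>cube d. l * Q \<nu> \<le> P \<nu>"
    by blast
  obtain q where "q \<in> PiE {..<d} (\<lambda>_. {0..1})" "\<forall>\<nu>\<in>cube d. Q \<nu> = bernoulli_prod d q \<nu>"
    using indep_marginals_imp_bernoulli_prod [OF l(2)] .
  then show "l \<in> product_scales d P"
    unfolding product_scales_def using l(1,3) by auto
next
  fix l
  assume "l \<in> product_scales d P"
  then obtain q where l: "0 \<le> l" "\<forall>\<nu>\<in>cube d. l * bernoulli_prod d q \<nu> \<le> P \<nu>"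
    and "q \<in> PiE {..<d} (\<lambda>_. {0..1})"
    unfolding product_scales_def by blast
  then have "q \<in> {..<d} \<rightarrow> {0..1}"
    by (auto simp: PiE_iff)
  then show "l \<in> {l. 0 \<le> l \<and> (\<exists>Q. prob_dist d Q \<and> indep_marginals d Q \<and>
                           (\<forall>\<nu>\<in>cube d. l * Q \<nu> \<le> P \<nu>))}"
    using l prob_dist_bernoulli_prod indep_marginals_bernoulli_prod by blast
qed

lemma product_scalesI:
  assumes "q \<in> {..<d} \<rightarrow> {0..1}" "0 \<le> l" "\<forall>\<nu>\<in>cube d. l * bernoulli_prod d q \<nu> \<le> P \<nu>"
  shows "l \<in> product_scales d P"
proof -
  have "bernoulli_prod d (restrict q {..<d}) = bernoulli_prod d q"
    unfolding bernoulli_prod_def by (intro ext prod.cong) auto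
  moreover have "restrict q {..<d} \<in> PiE {..<d} (\<lambda>_. {0..1})"
    using assms(1) by auto
  ultimately show ?thesis
    unfolding product_scales_def using assms(2,3)
    by (intro CollectI conjI bexI [of _ "restrict q {..<d}"]) simp_all
qed

lemma product_scales_le_1:
  assumes "prob_dist d P" "l \<in> product_scales d P"
  shows "l \<le> 1"
proof -
  obtain q where "\<forall>\<nu>\<in>cube d. l * bernoulli_prod d q \<nu> \<le> P \<nu>"
    using assms(2) unfolding product_scales_def by blast
  then have "(\<Sum>\<nu>\<in>cube d. l * bernoulli_prod d q \<nu>) \<le> (\<Sum>\<nu>\<in>cube d. P \<nu>)"
    by (intro sum_mono) auto
  then show ?thesis
    using assms(1) by (simp add: prob_dist_def sum_distrib_left [symmetric] sum_bernoulli_prod)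
qed

lemma compact_PiE:
  assumes "\<And>i. i \<in> I \<Longrightarrow> compact (S i)"
  shows "compact (PiE I S)"
proof -
  have "PiE I S = PiE UNIV (\<lambda>i. if i \<in> I then S i else {undefined})"
    by (auto simp: PiE_def extensional_def Pi_def)
  moreover have "compactin (product_topology (\<lambda>_. euclidean) UNIV)
      (PiE UNIV (\<lambda>i. if i \<in> I then S i else {undefined}))"
    using assms by (subst compactin_PiE) auto
  ultimately show ?thesis
    by (simp add: euclidean_product_topology)
qed

lemma continuous_on_bernoulli_prod:
  "continuous_on UNIV (\<lambda>q. bernoulli_prod d q \<nu>)"
  unfolding bernoulli_prod_def
proof (intro continuous_on_prod)
  fix i
  show "continuous_on UNIV (\<lambda>q :: nat \<Rightarrow> real. if \<nu> i then q i else 1 - q i)"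
    by (cases "\<nu> i") (auto intro!: continuous_intros continuous_on_product_coordinates)
qed

lemma compact_product_scales:
  assumes "prob_dist d P"
  shows "compact (product_scales d P)"
proof -
  define K where "K = ({0..1} \<times> PiE {..<d} (\<lambda>_. {0..1::real})) \<inter>
    (\<Inter>\<nu>\<in>cube d. {x. fst x * bernoulli_prod d (snd x) \<nu> \<le> P \<nu>})"
  have "compact K"
    unfolding K_def
    by (intro compact_Int_closed compact_Times compact_PiE compact_Icc closed_INT ballI
        closed_Collect_le continuous_intros
        continuous_on_compose2 [OF continuous_on_bernoulli_prod]) auto
  moreover have "product_scales d P = fst ` K"
  proof (intro equalityI subsetI)
    fix l
    assume l: "l \<in> product_scales d P"
    then obtain q where "q \<in> PiE {..<d} (\<lambda>_. {0..1})"
      and "\<forall>\<nu>\<in>cube d. l * bernoulli_prod d q \<nu> \<le> P \<nu>"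
      unfolding product_scales_def by blast
    moreover have "0 \<le> l" "l \<le> 1"
      using l product_scales_le_1 [OF assms] unfolding product_scales_def by auto
    ultimately have "(l, q) \<in> K"
      unfolding K_def by auto
    then show "l \<in> fst ` K"
      by force
  qed (auto simp: K_def product_scales_def; blast)
  ultimately show ?thesis
    by (simp add: compact_continuous_image continuous_on_fst)
qed

lemma lambdaP_in_product_scales:
  assumes "prob_dist d P"
  shows "lambdaP d P \<in> product_scales d P"
proof -
  have "0 \<in> product_scales d P"
    using assms by (intro product_scalesI [of "\<lambda>_. 0"]) (auto simp: prob_dist_def)
  then show ?thesis
    unfolding lambdaP_eq_Sup_product_scales using compact_product_scales [OF assms]
    by (intro closed_contains_Sup bounded_imp_bdd_above)
      (auto intro: compact_imp_closed compact_imp_bounded)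
qed

lemma le_lambdaP:
  assumes "prob_dist d P" "l \<in> product_scales d P"
  shows "l \<le> lambdaP d P"
  unfolding lambdaP_eq_Sup_product_scales using assms compact_product_scales [OF assms(1)]
  by (intro cSup_upper bounded_imp_bdd_above compact_imp_bounded)

lemma ex_Qset_mem:
  assumes "q \<in> {..<d} \<rightarrow> {0..1}"
  shows "\<exists>\<omega>\<in>cube d. q \<in> Qset d P \<omega>"
proof -
  let ?g = "\<lambda>\<nu>. ereal (P \<nu>) * f_om d \<nu> q"
  have "cube d \<noteq> {}"
    using ex_bernoulli_prod_pos [OF assms] by blast
  then obtain \<omega> where "\<omega> \<in> cube d" "?g \<omega> = Min (?g ` cube d)"
    using Min_in [of "?g ` cube d"] finite_cube by fastforce
  then have "\<forall>\<nu>\<in>cube d. ?g \<omega> \<le> ?g \<nu>"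
    by (simp add: finite_cube)
  then show ?thesis
    unfolding Qset_def using assms \<open>\<omega> \<in> cube d\<close> by blast
qed

lemma Qset_value:
  assumes P: "\<forall>\<nu>\<in>cube d. 0 < P \<nu>" and \<omega>: "\<omega> \<in> cube d" and q: "q \<in> Qset d P \<omega>"
  obtains m where "ereal (P \<omega>) * f_om d \<omega> q = ereal m"
    and "\<And>l. (\<forall>\<nu>\<in>cube d. l * bernoulli_prod d q \<nu> \<le> P \<nu>) \<longleftrightarrow> l \<le> m"
proof -
  let ?Q = "bernoulli_prod d q"
  let ?g = "\<lambda>\<nu>. ereal (P \<nu>) * inverse (ereal (?Q \<nu>))"
  have q01: "q \<in> {..<d} \<rightarrow> {0..1}"
    using q unfolding Qset_def by blast
  have min: "\<forall>\<nu>\<in>cube d. ?g \<omega> \<le> ?g \<nu>"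
    using q unfolding Qset_def mem_Collect_eq f_om_eq_inverse_bernoulli_prod [OF q01] by blast
  obtain \<nu>\<^sub>0 where "\<nu>\<^sub>0 \<in> cube d" "0 < ?Q \<nu>\<^sub>0"
    using ex_bernoulli_prod_pos [OF q01] by blast
  then have "?g \<omega> < \<infinity>"
    using min by (auto simp: divide_inverse [symmetric] intro: le_less_trans)
  then have "?Q \<omega> \<noteq> 0"
    using P \<omega> by auto
  then have g\<omega>: "?g \<omega> = ereal (P \<omega> / ?Q \<omega>)"
    by (simp add: divide_inverse)
  have "(\<forall>\<nu>\<in>cube d. l * ?Q \<nu> \<le> P \<nu>) \<longleftrightarrow> l \<le> P \<omega> / ?Q \<omega>" for l
  proof -
    have "(\<forall>\<nu>\<in>cube d. l * ?Q \<nu> \<le> P \<nu>) \<longleftrightarrow> (\<forall>\<nu>\<in>cube d. ereal l \<le> ?g \<nu>)"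
      using P
      by (intro ball_cong refl le_ereal_mult_inverse_iff [symmetric] bernoulli_prod_nonneg [OF q01])
        blast+
    also have "\<dots> \<longleftrightarrow> ereal l \<le> ?g \<omega>"
      using min \<omega> by (meson order_trans)
    also have "\<dots> \<longleftrightarrow> l \<le> P \<omega> / ?Q \<omega>"
      using g\<omega> by simp
    finally show ?thesis .
  qed
  with g\<omega> show thesis
    using that by (simp add: f_om_eq_inverse_bernoulli_prod [OF q01])
qed

lemma Qset_value_le_lambdaP:
  assumes "prob_dist d P" "\<forall>\<nu>\<in>cube d. 0 < P \<nu>" "\<omega> \<in> cube d" "q \<in> Qset d P \<omega>"
  shows "ereal (P \<omega>) * f_om d \<omega> q \<le> ereal (lambdaP d P)"
proof -
  obtain m where val: "ereal (P \<omega>) * f_om d \<omega> q = ereal m"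
    and fits: "\<And>l. (\<forall>\<nu>\<in>cube d. l * bernoulli_prod d q \<nu> \<le> P \<nu>) \<longleftrightarrow> l \<le> m"
    using Qset_value [OF assms(2-4)] by blast
  have "0 \<le> m"
    using fits [of 0] assms(2) by fastforce
  then have "m \<in> product_scales d P"
    using assms(4) fits [of m] by (intro product_scalesI) (auto simp: Qset_def)
  then show ?thesis
    using val le_lambdaP [OF assms(1)] by simp
qed

lemma lambdaP_attained:
  assumes "prob_dist d P" "\<forall>\<nu>\<in>cube d. 0 < P \<nu>"
  shows "\<exists>\<omega>\<in>cube d. \<exists>q\<in>Qset d P \<omega>. ereal (lambdaP d P) \<le> ereal (P \<omega>) * f_om d \<omega> q"
proof -
  obtain q where "q \<in> PiE {..<d} (\<lambda>_. {0..1})"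
    and fit: "\<forall>\<nu>\<in>cube d. lambdaP d P * bernoulli_prod d q \<nu> \<le> P \<nu>"
    using lambdaP_in_product_scales [OF assms(1)] unfolding product_scales_def by blast
  then obtain \<omega> where \<omega>: "\<omega> \<in> cube d" "q \<in> Qset d P \<omega>"
    using ex_Qset_mem [of q d P] by (auto simp: PiE_iff)
  obtain m where val: "ereal (P \<omega>) * f_om d \<omega> q = ereal m"
    and fits: "\<And>l. (\<forall>\<nu>\<in>cube d. l * bernoulli_prod d q \<nu> \<le> P \<nu>) \<longleftrightarrow> l \<le> m"
    using Qset_value [OF assms(2) \<omega>] by blast
  have "ereal (lambdaP d P) \<le> ereal (P \<omega>) * f_om d \<omega> q"
    using fits fit val by simp
  with \<omega> show ?thesis
    by blast
qed

theorem lemma2: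
  fixes d :: nat and P :: "(nat \<Rightarrow> bool) \<Rightarrow> real"
  assumes "d \<ge> 1"
    and "prob_dist d P"
    and "\<forall>\<nu>\<in>cube d. P \<nu> > 0"
  shows "(\<exists>\<omega>\<in>cube d. \<exists>q\<in>Qset d P \<omega>. ereal (P \<omega>) * f_om d \<omega> q = ereal (lambdaP d P))
       \<and> (\<forall>\<omega>\<in>cube d. \<forall>q\<in>Qset d P \<omega>. ereal (P \<omega>) * f_om d \<omega> q \<le> ereal (lambdaP d P))"
  using lambdaP_attained [OF assms(2,3)] Qset_value_le_lambdaP [OF assms(2,3)]
  by (meson antisym)

end
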